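(* Let $t\ge 2$ and $k\ge 2$ be integers. Then there is a constant $c_{t,k}>0$ depending only on $t$ and $k$ such that for all sufficiently large $n$, \[ \operatorname{br}_k(C_{2t};K_{n,n}) \le \frac{c_{t,k}\, n^2}{\log^2 n}. \]
   Context: $C_{2t}$ denotes the cycle of length $2t$ and $K_{n,n}$ the complete bipartite graph with both parts of size $n$. For bipartite graphs $G_1,G_2$ and an integer $k\ge1$, the multicolor bipartite Ramsey number $\operatorname{br}_k(G_1;G_2)$ is the least integer $N$ such that every coloring of the edges of $K_{N,N}$ with $k+1$ colors $1,\dots,k+1$ contains a monochromatic copy of $G_1$ in one of the colors $1,\dots,k$ or a monochromatic copy of $G_2$ in color $k+1$. Rounding is ignored. *)

theory Defs
  imports Complex_Main
begin

text \<open>K_{N,N}: left vertices 0..N-1, right vertices 0..N-1; an edge colouring is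
  col :: nat => nat => nat, where col i j is the colour of the edge (left i, right j).\<close>

definition has_mono_cycle :: "nat \<Rightarrow> (nat \<Rightarrow> nat \<Rightarrow> nat) \<Rightarrow> nat \<Rightarrow> nat \<Rightarrow> bool" where
  "has_mono_cycle N col c t \<longleftrightarrow>
     (\<exists>a b :: nat \<Rightarrow> nat. inj_on a {0..<t} \<and> inj_on b {0..<t} \<and>
        a ` {0..<t} \<subseteq> {0..<N} \<and> b ` {0..<t} \<subseteq> {0..<N} \<and>
        (\<forall>i<t. col (a i) (b i) = c \<and> col (a ((i + 1) mod t)) (b i) = c))"

text \<open>Monochromatic copy of K_{n,n} in colour c (any copy of a connected bipartite
  graph in K_{N,N} respects the bipartition).\<close>
definition has_mono_Knn :: "nat \<Rightarrow> (nat \<Rightarrow> nat \<Rightarrow> nat) \<Rightarrow> nat \<Rightarrow> nat \<Rightarrow> bool" where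
  "has_mono_Knn N col c n \<longleftrightarrow>
     (\<exists>A B. A \<subseteq> {0..<N} \<and> B \<subseteq> {0..<N} \<and> card A = n \<and> card B = n \<and>
        (\<forall>x\<in>A. \<forall>y\<in>B. col x y = c))"

definition br_cycle_Knn :: "nat \<Rightarrow> nat \<Rightarrow> nat \<Rightarrow> nat" where
  "br_cycle_Knn k t n = (LEAST N. \<forall>col :: nat \<Rightarrow> nat \<Rightarrow> nat.
      (\<forall>i<N. \<forall>j<N. col i j \<in> {1..k+1}) \<longrightarrow>
      (\<exists>c\<in>{1..k}. has_mono_cycle N col c t) \<or> has_mono_Knn N col (k + 1) n)"

end

theory Submission
  imports Defs "HOL-Real_Asymp.Real_Asymp"
begin

text \<open>Suppose no colour among \<open>1..k\<close> contains a \<open>C\<^sub>2\<^sub>t\<close>. A bipartite graph with more than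
  \<open>d (|X| + |Y|)\<close> edges has a nonempty subgraph of minimum degree \<open>d\<close>, and for \<open>d \<approx> \<surd>(t N)\<close>
  such a subgraph contains a \<open>C\<^sub>2\<^sub>t\<close>: fix a vertex \<open>v\<close>, pass to a subgraph of minimum degree \<open>t\<close>
  between the neighbourhood of \<open>v\<close> and the other vertices, walk a path with \<open>t\<close> vertices in the
  neighbourhood there and close it through \<open>v\<close>. So each of the colours \<open>1..k\<close> has \<open>O(\<surd>t N\<^sup>3\<^sup>/\<^sup>2)\<close>
  edges, and at least half of the right vertices have at most \<open>D = O(k \<surd>(t N))\<close> neighbours in
  these colours. Choosing \<open>n\<close> left vertices greedily, each time one with fewest such neighbours
  among the surviving right vertices, keeps a fraction \<open>(1 - 2D/N)\<^sup>n \<ge> exp (-6Dn/N)\<close> of them.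
  For \<open>N \<approx> c n\<^sup>2 / log\<^sup>2 n\<close> this is at least \<open>n\<^sup>-\<^sup>1\<^sup>/\<^sup>2\<close>, which leaves \<open>n\<close> right vertices joined to all
  chosen left vertices in colour \<open>k + 1\<close>.\<close>

definition bi_edges :: "('a \<Rightarrow> 'b \<Rightarrow> bool) \<Rightarrow> 'a set \<Rightarrow> 'b set \<Rightarrow> ('a \<times> 'b) set" where
  "bi_edges R X Y = {(x, y) \<in> X \<times> Y. R x y}"

definition has_bi_cycle :: "('a \<Rightarrow> 'b \<Rightarrow> bool) \<Rightarrow> 'a set \<Rightarrow> 'b set \<Rightarrow> nat \<Rightarrow> bool" where
  "has_bi_cycle R X Y t \<longleftrightarrow>
     (\<exists>a b. inj_on a {0..<t} \<and> inj_on b {0..<t} \<and> a ` {0..<t} \<subseteq> X \<and> b ` {0..<t} \<subseteq> Y \<and>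
        (\<forall>i<t. R (a i) (b i) \<and> R (a ((i + 1) mod t)) (b i)))"

lemma has_mono_cycle_iff_has_bi_cycle:
  "has_mono_cycle N col c t \<longleftrightarrow> has_bi_cycle (\<lambda>x y. col x y = c) {0..<N} {0..<N} t"
  unfolding has_mono_cycle_def has_bi_cycle_def ..

lemma finite_bi_edges: "finite X \<Longrightarrow> finite Y \<Longrightarrow> finite (bi_edges R X Y)"
  unfolding bi_edges_def by (rule finite_subset[of _ "X \<times> Y"]) auto

lemma card_bi_edges_left:
  assumes "finite X" "finite Y"
  shows "card (bi_edges R X Y) = (\<Sum>x\<in>X. card {y\<in>Y. R x y})"
proof -
  have "bi_edges R X Y = (SIGMA x:X. {y\<in>Y. R x y})" by (auto simp: bi_edges_def)
  then show ?thesis using assms by simp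
qed

lemma card_bi_edges_swap: "card (bi_edges (\<lambda>y x. R x y) Y X) = card (bi_edges R X Y)"
proof -
  have "bi_edges (\<lambda>y x. R x y) Y X = prod.swap ` bi_edges R X Y" by (auto simp: bi_edges_def)
  then show ?thesis by (simp add: card_image)
qed

lemma card_bi_edges_right:
  assumes "finite X" "finite Y"
  shows "card (bi_edges R X Y) = (\<Sum>y\<in>Y. card {x\<in>X. R x y})"
proof -
  have "card (bi_edges R X Y) = card (bi_edges (\<lambda>y x. R x y) Y X)"
    by (rule card_bi_edges_swap[symmetric])
  also have "\<dots> = (\<Sum>y\<in>Y. card {x\<in>X. R x y})"
    by (rule card_bi_edges_left[OF assms(2,1)])
  finally show ?thesis .
qed

lemma card_bi_edges_remove_left:
  assumes "finite X" "finite Y" "x \<in> X"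
  shows "card (bi_edges R X Y) = card {y\<in>Y. R x y} + card (bi_edges R (X - {x}) Y)"
  using assms by (simp add: card_bi_edges_left sum.remove)

lemma card_bi_edges_remove_right:
  assumes "finite X" "finite Y" "y \<in> Y"
  shows "card (bi_edges R X Y) = card {x\<in>X. R x y} + card (bi_edges R X (Y - {y}))"
  using assms by (simp add: card_bi_edges_right sum.remove)

lemma bi_edges_min_degree_subgraph:
  assumes "finite X" "finite Y" "d * (card X + card Y) < card (bi_edges R X Y)"
  shows "\<exists>X'\<subseteq>X. \<exists>Y'\<subseteq>Y. X' \<noteq> {} \<and> Y' \<noteq> {} \<and>
    (\<forall>x\<in>X'. d \<le> card {y\<in>Y'. R x y}) \<and> (\<forall>y\<in>Y'. d \<le> card {x\<in>X'. R x y})"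
  using assms
proof (induction "card X + card Y" arbitrary: X Y rule: less_induct)
  case less
  consider x where "x \<in> X" "card {y\<in>Y. R x y} < d"
    | y where "y \<in> Y" "card {x\<in>X. R x y} < d"
    | "\<forall>x\<in>X. d \<le> card {y\<in>Y. R x y}" "\<forall>y\<in>Y. d \<le> card {x\<in>X. R x y}"
    by (meson not_le)
  then show ?case
  proof cases
    case (1 x)
    have "d * (card (X - {x}) + card Y) + d = d * (card X + card Y)"
      using card_Suc_Diff1[OF less.prems(1) 1(1), symmetric]
      by (simp del: card_Diff_insert add: algebra_simps)
    then have "d * (card (X - {x}) + card Y) < card (bi_edges R (X - {x}) Y)"
      using less.prems(3) 1(2) card_bi_edges_remove_left[OF less.prems(1,2) 1(1), of R] by linarith
    with less.prems(1,2) card_Diff1_less[OF less.prems(1) 1(1)]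
    have "\<exists>X'\<subseteq>X - {x}. \<exists>Y'\<subseteq>Y. X' \<noteq> {} \<and> Y' \<noteq> {} \<and>
        (\<forall>x\<in>X'. d \<le> card {y\<in>Y'. R x y}) \<and> (\<forall>y\<in>Y'. d \<le> card {x\<in>X'. R x y})"
      by (intro less.hyps) auto
    then show ?thesis by blast
  next
    case (2 y)
    have "d * (card X + card (Y - {y})) + d = d * (card X + card Y)"
      using card_Suc_Diff1[OF less.prems(2) 2(1), symmetric]
      by (simp del: card_Diff_insert add: algebra_simps)
    then have "d * (card X + card (Y - {y})) < card (bi_edges R X (Y - {y}))"
      using less.prems(3) 2(2) card_bi_edges_remove_right[OF less.prems(1,2) 2(1), of R] by linarith
    with less.prems(1,2) card_Diff1_less[OF less.prems(2) 2(1)]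
    have "\<exists>X'\<subseteq>X. \<exists>Y'\<subseteq>Y - {y}. X' \<noteq> {} \<and> Y' \<noteq> {} \<and>
        (\<forall>x\<in>X'. d \<le> card {y\<in>Y'. R x y}) \<and> (\<forall>y\<in>Y'. d \<le> card {x\<in>X'. R x y})"
      by (intro less.hyps) auto
    then show ?thesis by blast
  next
    case 3
    have "bi_edges R X Y \<noteq> {}" using less.prems(3) by auto
    then have "X \<noteq> {}" "Y \<noteq> {}" by (auto simp: bi_edges_def)
    with 3 show ?thesis by blast
  qed
qed

lemma ex_not_in_if_card_less:
  assumes "finite S" "card S < card A"
  shows "\<exists>a\<in>A. a \<notin> S"
proof (rule ccontr)
  assume "\<not> ?thesis"
  then have "card A \<le> card S" using assms(1) by (intro card_mono) auto
  with assms(2) show False by simp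
qed

lemma bi_min_degree_path:
  assumes "finite X" "finite Y" "Y \<noteq> {}"
    and deg_X: "\<forall>x\<in>X. t \<le> card {y\<in>Y. R x y}" and deg_Y: "\<forall>y\<in>Y. t \<le> card {x\<in>X. R x y}"
  shows "m < t \<Longrightarrow> \<exists>a b. a ` {1..m} \<subseteq> X \<and> b ` {0..m} \<subseteq> Y \<and> inj_on a {1..m} \<and> inj_on b {0..m} \<and>
    (\<forall>i\<in>{1..m}. R (a i) (b (i - 1)) \<and> R (a i) (b i))"
proof (induction m)
  case 0
  obtain y where "y \<in> Y" using assms(3) by blast
  then show ?case by (intro exI[of _ "\<lambda>_. undefined"] exI[of _ "\<lambda>_. y"]) auto
next
  case (Suc m)
  then obtain a b where path: "a ` {1..m} \<subseteq> X" "b ` {0..m} \<subseteq> Y" "inj_on a {1..m}" "inj_on b {0..m}"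
    "\<forall>i\<in>{1..m}. R (a i) (b (i - 1)) \<and> R (a i) (b i)"
    by auto
  have "b m \<in> Y" using path(2) by auto
  have "card (a ` {1..m}) \<le> m" using card_image_le[of "{1..m}" a] by simp
  also have "m < t" using Suc.prems by simp
  also have "t \<le> card {x\<in>X. R x (b m)}" using deg_Y \<open>b m \<in> Y\<close> by blast
  finally obtain x where x: "x \<in> X" "R x (b m)" "x \<notin> a ` {1..m}"
    using ex_not_in_if_card_less[of "a ` {1..m}"] by auto
  have "card (b ` {0..m}) \<le> Suc m" using card_image_le[of "{0..m}" b] by simp
  also have "Suc m < t" using Suc.prems by simp
  also have "t \<le> card {y\<in>Y. R x y}" using deg_X x(1) by blast
  finally obtain y where y: "y \<in> Y" "R x y" "y \<notin> b ` {0..m}"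
    using ex_not_in_if_card_less[of "b ` {0..m}"] by auto
  have ins: "{1..Suc m} = insert (Suc m) {1..m}" "{0..Suc m} = insert (Suc m) {0..m}" by auto
  show ?case
  proof (intro exI conjI)
    show "inj_on (a(Suc m := x)) {1..Suc m}" "inj_on (b(Suc m := y)) {0..Suc m}"
      unfolding ins using path(3,4) x(3) y(3) by (simp_all add: inj_on_fun_updI)
    show "(a(Suc m := x)) ` {1..Suc m} \<subseteq> X" "(b(Suc m := y)) ` {0..Suc m} \<subseteq> Y"
      unfolding ins using path(1,2) x(1) y(1) by auto
    show "\<forall>i\<in>{1..Suc m}.
        R ((a(Suc m := x)) i) ((b(Suc m := y)) (i - 1)) \<and> R ((a(Suc m := x)) i) ((b(Suc m := y)) i)"
      unfolding ins using path(5) x(2) y(2) by auto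
  qed
qed

lemma has_bi_cycle_close_path:
  assumes "2 \<le> t" and "v \<in> X" "v \<notin> a ` {1..t - 1}"
    and "a ` {1..t - 1} \<subseteq> X" "b ` {0..t - 1} \<subseteq> Y" "inj_on a {1..t - 1}" "inj_on b {0..t - 1}"
    and path: "\<forall>i\<in>{1..t - 1}. R (a i) (b (i - 1)) \<and> R (a i) (b i)"
    and "R v (b 0)" "R v (b (t - 1))"
  shows "has_bi_cycle R X Y t"
proof -
  have split: "{0..<t} = insert 0 {1..t - 1}" "{0..<t} = {0..t - 1}" using assms(1) by auto
  have "R ((a(0 := v)) i) (b i) \<and> R ((a(0 := v)) ((i + 1) mod t)) (b i)" if "i < t" for i
    using that path[rule_format, of i] path[rule_format, of "i + 1"] assms(9,10)
    by (cases "i = 0"; cases "i + 1 = t") auto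
  moreover have "inj_on (a(0 := v)) {0..<t}"
    unfolding split(1) using assms(3,6) by (auto simp: inj_on_def)
  ultimately show ?thesis
    unfolding has_bi_cycle_def split(2)[symmetric] using assms(2,4,5,7) split
    by (intro exI[of _ "a(0 := v)"] exI[of _ b]) auto
qed

lemma has_bi_cycle_mono:
  assumes "has_bi_cycle R X Y t" "X \<subseteq> X'" "Y \<subseteq> Y'"
  shows "has_bi_cycle R X' Y' t"
proof -
  from assms(1) obtain a b where "inj_on a {0..<t}" "inj_on b {0..<t}" "a ` {0..<t} \<subseteq> X"
    "b ` {0..<t} \<subseteq> Y" "\<forall>i<t. R (a i) (b i) \<and> R (a ((i + 1) mod t)) (b i)"
    unfolding has_bi_cycle_def by blast
  with assms(2,3) show ?thesis unfolding has_bi_cycle_def by (intro exI[of _ a] exI[of _ b]) auto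
qed

lemma has_bi_cycle_if_min_degree:
  assumes "finite X" "finite Y" "X \<noteq> {}" "2 \<le> t" "t + 1 < d" "t * card X < (d - 1 - t) * d"
    and deg_X: "\<forall>x\<in>X. d \<le> card {y\<in>Y. R x y}" and deg_Y: "\<forall>y\<in>Y. d \<le> card {x\<in>X. R x y}"
  shows "has_bi_cycle R X Y t"
proof -
  obtain v where "v \<in> X" using assms(3) by blast
  define S where "S = {y\<in>Y. R v y}"
  have "d \<le> card S" using deg_X \<open>v \<in> X\<close> by (simp add: S_def)
  have fin: "finite S" "finite (X - {v})" using assms(1,2) by (auto simp: S_def)
  have "t * (card (X - {v}) + card S) < (\<Sum>y\<in>S. d - 1)"
  proof -
    have "t * card (X - {v}) < (d - 1 - t) * card S"
      using assms(6) \<open>d \<le> card S\<close> card_Diff1_le[of X v]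
      by (meson le_less_trans less_le_trans mult_le_mono order_refl)
    then show ?thesis using assms(5) by (simp add: algebra_simps diff_mult_distrib2)
  qed
  also have "\<dots> \<le> (\<Sum>y\<in>S. card {x\<in>X - {v}. R x y})"
  proof (rule sum_mono)
    fix y assume "y \<in> S"
    then have "d \<le> card {x\<in>X. R x y}" using deg_Y by (simp add: S_def)
    moreover have "card {x\<in>X. R x y} - card {v} \<le> card ({x\<in>X. R x y} - {v})"
      by (rule diff_card_le_card_Diff) simp
    moreover have "{x\<in>X - {v}. R x y} = {x\<in>X. R x y} - {v}" by auto
    ultimately show "d - 1 \<le> card {x\<in>X - {v}. R x y}" by simp
  qed
  also have "\<dots> = card (bi_edges R (X - {v}) S)" using fin by (simp add: card_bi_edges_right)
  finally obtain X' Y' where sub: "X' \<subseteq> X - {v}" "Y' \<subseteq> S" "Y' \<noteq> {}"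
    and deg_X': "\<forall>x\<in>X'. t \<le> card {y\<in>Y'. R x y}" and deg_Y': "\<forall>y\<in>Y'. t \<le> card {x\<in>X'. R x y}"
    using bi_edges_min_degree_subgraph[OF fin(2,1), of t R] by auto
  have "finite X'" "finite Y'" using sub(1,2) fin by (auto intro: finite_subset)
  then obtain a b where path: "a ` {1..t - 1} \<subseteq> X'" "b ` {0..t - 1} \<subseteq> Y'"
      "inj_on a {1..t - 1}" "inj_on b {0..t - 1}"
      "\<forall>i\<in>{1..t - 1}. R (a i) (b (i - 1)) \<and> R (a i) (b i)"
    using bi_min_degree_path[OF _ _ sub(3) deg_X' deg_Y', of "t - 1"] assms(4) by auto
  have "b 0 \<in> S" "b (t - 1) \<in> S" using path(2) sub(2) by (auto simp: image_subset_iff)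
  moreover have "a ` {1..t - 1} \<subseteq> X - {v}" using path(1) sub(1) by (rule subset_trans)
  moreover have "b ` {0..t - 1} \<subseteq> Y" using path(2) sub(2) by (auto simp: S_def)
  ultimately show ?thesis
    using path(3-5) \<open>v \<in> X\<close> by (intro has_bi_cycle_close_path[OF assms(4), of v]) (auto simp: S_def)
qed

lemma card_bi_edges_le_if_no_bi_cycle:
  assumes "finite X" "finite Y" "2 \<le> t" "\<not> has_bi_cycle R X Y t"
    and "t + 1 < d" "t * card X < (d - 1 - t) * d"
  shows "card (bi_edges R X Y) \<le> d * (card X + card Y)"
proof (rule ccontr)
  assume "\<not> ?thesis"
  then obtain X' Y' where sub: "X' \<subseteq> X" "Y' \<subseteq> Y" "X' \<noteq> {}"
    and deg: "\<forall>x\<in>X'. d \<le> card {y\<in>Y'. R x y}" "\<forall>y\<in>Y'. d \<le> card {x\<in>X'. R x y}"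
    using bi_edges_min_degree_subgraph[OF assms(1,2), of d R] by auto
  have "finite X'" "finite Y'" using sub(1,2) assms(1,2) by (auto intro: finite_subset)
  moreover have "t * card X' < (d - 1 - t) * d"
    using assms(6) card_mono[OF assms(1) sub(1)] by (meson le_less_trans mult_le_mono order_refl)
  ultimately have "has_bi_cycle R X' Y' t"
    using has_bi_cycle_if_min_degree[OF _ _ sub(3) assms(3,5) _ deg] by blast
  with assms(4) sub(1,2) show False by (blast intro: has_bi_cycle_mono)
qed

lemma exists_vertex_few_neighbours:
  fixes D :: real
  assumes "finite Z" "finite B" "Z \<noteq> {}" and deg: "\<forall>y\<in>B. card {x\<in>Z. H x y} \<le> D"
  shows "\<exists>x\<in>Z. card B * (1 - D / card Z) \<le> card {y\<in>B. \<not> H x y}"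
proof -
  define f where "f x = card {y\<in>B. H x y}" for x
  have "Min (f ` Z) \<in> f ` Z" using assms(1,3) by simp
  then obtain x where "x \<in> Z" "f x = Min (f ` Z)" by auto
  then have "card Z * f x \<le> card (bi_edges H Z B)"
    using card_Min_le_sum[OF assms(1), of f] assms(1,2) by (simp add: card_bi_edges_left f_def)
  also have "\<dots> = (\<Sum>y\<in>B. card {x\<in>Z. H x y})" using assms(1,2) by (rule card_bi_edges_right)
  finally have "real (card Z * f x) \<le> real (\<Sum>y\<in>B. card {x\<in>Z. H x y})"
    by (simp only: of_nat_le_iff)
  also have "\<dots> \<le> card B * D" using sum_mono[of B _ "\<lambda>_. D"] deg by simp
  finally have "card Z * f x \<le> card B * D" by simp
  moreover have "0 < card Z" using assms(1,3) by (simp add: card_gt_0_iff)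
  ultimately have "f x \<le> card B * D / card Z" by (simp add: field_simps)
  moreover have "card B = card ({y\<in>B. \<not> H x y} \<union> {y\<in>B. H x y})"
    by (rule arg_cong[where f = card]) auto
  then have "real (card B) = card {y\<in>B. \<not> H x y} + f x"
    using assms(2) by (simp add: card_Un_disjoint disjoint_iff f_def)
  moreover have "card B * (1 - D / card Z) = card B - card B * D / card Z"
    by (simp add: right_diff_distrib)
  ultimately have "card B * (1 - D / card Z) \<le> card {y\<in>B. \<not> H x y}" by linarith
  then show ?thesis using \<open>x \<in> Z\<close> by blast
qed

lemma greedy_bi_hole:
  fixes D :: real
  assumes "finite X" "finite Y" and deg: "\<forall>y\<in>Y. card {x\<in>X. H x y} \<le> D"
    and "0 \<le> D" "2 * D \<le> card X"
  shows "2 * j \<le> card X \<Longrightarrow> \<exists>A\<subseteq>X. \<exists>B\<subseteq>Y. card A = j \<and> (\<forall>x\<in>A. \<forall>y\<in>B. \<not> H x y) \<and>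
    card Y * (1 - 2 * D / card X) ^ j \<le> card B"
proof (induction j)
  case 0
  show ?case by (intro exI[of _ "{}"] exI[of _ Y]) auto
next
  case (Suc j)
  then obtain A B where "A \<subseteq> X" "B \<subseteq> Y" "card A = j" and hole: "\<forall>x\<in>A. \<forall>y\<in>B. \<not> H x y"
    and B_large: "card Y * (1 - 2 * D / card X) ^ j \<le> card B"
    by auto
  have "card (X - A) = card X - j"
    using \<open>A \<subseteq> X\<close> \<open>card A = j\<close> assms(1) by (simp add: card_Diff_subset finite_subset)
  then have rest_large: "card X \<le> 2 * card (X - A)" "0 < card (X - A)" "0 < card X"
    using Suc.prems by auto
  have "\<forall>y\<in>B. card {x\<in>X - A. H x y} \<le> D"
  proof
    fix y assume "y \<in> B"
    have "card {x\<in>X - A. H x y} \<le> card {x\<in>X. H x y}" using assms(1) by (intro card_mono) auto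
    moreover have "card {x\<in>X. H x y} \<le> D" using deg \<open>B \<subseteq> Y\<close> \<open>y \<in> B\<close> by blast
    ultimately show "card {x\<in>X - A. H x y} \<le> D" by linarith
  qed
  then have "\<exists>x\<in>X - A. card B * (1 - D / card (X - A)) \<le> card {y\<in>B. \<not> H x y}"
    using rest_large(2) assms(1,2) \<open>B \<subseteq> Y\<close>
    by (intro exists_vertex_few_neighbours) (auto simp: card_gt_0_iff finite_subset)
  then obtain x where "x \<in> X - A"
    and x_few: "card B * (1 - D / card (X - A)) \<le> card {y\<in>B. \<not> H x y}"
    by blast
  have "D * card X \<le> D * (2 * card (X - A))"
    using rest_large(1) assms(4) by (intro mult_left_mono) simp_all
  then have "D / card (X - A) \<le> 2 * D / card X" using rest_large(2,3) by (simp add: field_simps)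
  then have "card B * (1 - 2 * D / card X) \<le> card {y\<in>B. \<not> H x y}"
    using x_few by (smt (verit) mult_left_mono of_nat_0_le_iff)
  moreover have "0 \<le> 1 - 2 * D / card X" using assms(5) by (cases "card X = 0") (simp_all add: field_simps)
  ultimately have "card Y * (1 - 2 * D / card X) ^ Suc j \<le> card {y\<in>B. \<not> H x y}"
    using mult_right_mono[OF B_large] by (smt (verit) mult.assoc mult.commute power_Suc)
  then show ?case
  proof (intro exI conjI)
    show "insert x A \<subseteq> X" "{y\<in>B. \<not> H x y} \<subseteq> Y"
      using \<open>x \<in> X - A\<close> \<open>A \<subseteq> X\<close> \<open>B \<subseteq> Y\<close> by auto
    show "card (insert x A) = Suc j"
      using \<open>x \<in> X - A\<close> \<open>card A = j\<close> finite_subset[OF \<open>A \<subseteq> X\<close> assms(1)] by simp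
    show "\<forall>x'\<in>insert x A. \<forall>y\<in>{y\<in>B. \<not> H x y}. \<not> H x' y" using hole by auto
  qed
qed

lemma card_low_degree_ge_half:
  fixes D :: real
  assumes "finite X" "finite Y" "0 < D" and sparse: "2 * card (bi_edges H X Y) \<le> D * card Y"
  shows "card Y \<le> 2 * card {y\<in>Y. card {x\<in>X. H x y} \<le> D}"
proof -
  define deg where "deg y = card {x\<in>X. H x y}" for y
  define high where "high = {y\<in>Y. D < deg y}"
  have "card high * D = (\<Sum>y\<in>high. D)" by simp
  also have "\<dots> \<le> (\<Sum>y\<in>high. real (deg y))" by (rule sum_mono) (simp add: high_def)
  also have "\<dots> \<le> (\<Sum>y\<in>Y. real (deg y))" using assms(2) by (intro sum_mono2) (auto simp: high_def)
  also have "\<dots> = card (bi_edges H X Y)" using assms(1,2) by (simp add: card_bi_edges_right deg_def)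
  finally have "D * (2 * real (card high)) \<le> D * card Y" using sparse by (simp add: algebra_simps)
  then have "2 * card high \<le> card Y" using assms(3) by (simp add: mult_le_cancel_left_pos)
  moreover have "card Y = card {y\<in>Y. deg y \<le> D} + card high"
    using assms(2) by (subst card_Un_disjoint[symmetric]) (auto intro: arg_cong[where f = card] simp: high_def)
  ultimately show ?thesis by (simp add: deg_def)
qed

lemma sparse_bipartite_has_bi_hole:
  fixes D :: real
  assumes "finite X" "finite Y" "0 < D" "2 * card (bi_edges H X Y) \<le> D * card Y"
    and "2 * D \<le> card X" "2 * n \<le> card X" "2 * n \<le> card Y * (1 - 2 * D / card X) ^ n"
  shows "\<exists>A\<subseteq>X. \<exists>B\<subseteq>Y. card A = n \<and> card B = n \<and> (\<forall>x\<in>A. \<forall>y\<in>B. \<not> H x y)"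
proof -
  define Y0 where "Y0 = {y\<in>Y. card {x\<in>X. H x y} \<le> D}"
  have Y0_large: "card Y \<le> 2 * card Y0"
    using card_low_degree_ge_half[OF assms(1-4)] by (simp add: Y0_def)
  have Y0: "finite Y0" "\<forall>y\<in>Y0. card {x\<in>X. H x y} \<le> D" using assms(2) by (simp_all add: Y0_def)
  obtain A B where "A \<subseteq> X" "B \<subseteq> Y0" "card A = n" and hole: "\<forall>x\<in>A. \<forall>y\<in>B. \<not> H x y"
    and B_large: "card Y0 * (1 - 2 * D / card X) ^ n \<le> card B"
    using greedy_bi_hole[OF assms(1) Y0 less_imp_le[OF assms(3)] assms(5,6)] by blast
  have "0 \<le> 1 - 2 * D / card X" using assms(5) by (cases "card X = 0") (simp_all add: field_simps)
  then have "card Y * (1 - 2 * D / card X) ^ n \<le> 2 * card Y0 * (1 - 2 * D / card X) ^ n"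
    using Y0_large by (intro mult_right_mono) simp_all
  then have "n \<le> card B" using assms(7) B_large by linarith
  then obtain B' where "B' \<subseteq> B" "card B' = n" by (meson obtain_subset_with_card_n)
  moreover have "B \<subseteq> Y" using \<open>B \<subseteq> Y0\<close> by (auto simp: Y0_def)
  ultimately show ?thesis
    using \<open>A \<subseteq> X\<close> \<open>card A = n\<close> hole by (intro exI[of _ A] conjI exI[of _ B']) auto
qed

lemma mono_Knn_if_no_mono_cycle:
  fixes k t d n N :: nat
  assumes "2 \<le> t" "1 \<le> k" "t + 1 < d" "t * N < (d - 1 - t) * d"
    and "8 * k * d \<le> N" "2 * n \<le> N" "2 * real n \<le> N * (1 - 8 * real (k * d) / N) ^ n"
    and col: "\<forall>i<N. \<forall>j<N. col i j \<in> {1..k + 1}"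
    and no_cycle: "\<not> (\<exists>c\<in>{1..k}. has_mono_cycle N col c t)"
  shows "has_mono_Knn N col (k + 1) n"
proof -
  define H where "H x y \<longleftrightarrow> col x y \<noteq> k + 1" for x y
  let ?E = "\<lambda>c. bi_edges (\<lambda>x y. col x y = c) {0..<N} {0..<N}"
  have "bi_edges H {0..<N} {0..<N} \<subseteq> (\<Union>c\<in>{1..k}. ?E c)"
  proof
    fix e assume "e \<in> bi_edges H {0..<N} {0..<N}"
    then obtain x y where e: "e = (x, y)" "x < N" "y < N" "col x y \<noteq> k + 1"
      by (auto simp: bi_edges_def H_def)
    then have "col x y \<in> {1..k}" using col by fastforce
    with e show "e \<in> (\<Union>c\<in>{1..k}. ?E c)" by (auto simp: bi_edges_def)
  qed
  then have "card (bi_edges H {0..<N} {0..<N}) \<le> card (\<Union>c\<in>{1..k}. ?E c)"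
    by (rule card_mono[rotated]) (simp add: finite_bi_edges)
  also have "\<dots> \<le> (\<Sum>c\<in>{1..k}. card (?E c))" by (rule card_UN_le) simp
  also have "\<dots> \<le> (\<Sum>c\<in>{1..k}. d * (N + N))"
  proof (rule sum_mono)
    fix c assume "c \<in> {1..k}"
    then have "\<not> has_bi_cycle (\<lambda>x y. col x y = c) {0..<N} {0..<N} t"
      using no_cycle by (auto simp: has_mono_cycle_iff_has_bi_cycle)
    from card_bi_edges_le_if_no_bi_cycle[OF _ _ assms(1) this assms(3)] assms(4)
    show "card (?E c) \<le> d * (N + N)" by simp
  qed
  finally have sparse: "2 * card (bi_edges H {0..<N} {0..<N}) \<le> real (4 * k * d) * card {0..<N}"
    by (simp add: algebra_simps flip: of_nat_mult)
  have "\<exists>A\<subseteq>{0..<N}. \<exists>B\<subseteq>{0..<N}. card A = n \<and> card B = n \<and> (\<forall>x\<in>A. \<forall>y\<in>B. \<not> H x y)"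
  proof (rule sparse_bipartite_has_bi_hole[OF _ _ _ sparse])
    show "0 < real (4 * k * d)" using assms(2,3) by simp
    have "real (8 * k * d) \<le> real N" using assms(5) by (rule of_nat_mono)
    then show "2 * real (4 * k * d) \<le> card {0..<N}" by simp
    show "2 * n \<le> card {0..<N}" using assms(6) by simp
    show "2 * real n \<le> card {0..<N} * (1 - 2 * real (4 * k * d) / card {0..<N}) ^ n"
      using assms(7) by simp
  qed simp_all
  then show ?thesis unfolding has_mono_Knn_def H_def by blast
qed

lemma sqrt_degree_threshold:
  fixes t N :: nat
  defines "d \<equiv> nat \<lceil>sqrt (t * N)\<rceil> + t + 2"
  shows "t + 1 < d" and "t * N < (d - 1 - t) * d"
    and "1 \<le> t \<Longrightarrow> t + 3 \<le> sqrt N \<Longrightarrow> d \<le> 2 * t * sqrt N"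
proof -
  define s where "s = nat \<lceil>sqrt (t * N)\<rceil>"
  have d_eq: "d = s + t + 2" unfolding d_def s_def ..
  have s_eq: "real s = of_int \<lceil>sqrt (t * N)\<rceil>" by (simp add: s_def)
  have s_ge: "sqrt (t * N) \<le> s" unfolding s_eq by (rule le_of_int_ceiling)
  have s_le: "s \<le> sqrt (t * N) + 1" unfolding s_eq by (rule of_int_ceiling_le_add_one)
  show "t + 1 < d" by (simp add: d_eq)
  have "real (t * N) = sqrt (t * N) ^ 2" by simp
  also have "\<dots> \<le> real (s ^ 2)" using power_mono[OF s_ge, of 2] by simp
  finally have "t * N \<le> s ^ 2" by (simp only: of_nat_le_iff)
  also have "\<dots> < (s + 1) * (s + t + 2)" by (simp add: power2_eq_square algebra_simps)
  finally show "t * N < (d - 1 - t) * d" by (simp add: d_eq)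
  assume "1 \<le> t" "t + 3 \<le> sqrt N"
  have "sqrt t * 1 \<le> sqrt t * sqrt t" using \<open>1 \<le> t\<close> by (intro mult_left_mono real_sqrt_ge_one) auto
  then have "sqrt t \<le> t" by simp
  then have "sqrt (t * N) \<le> t * sqrt N" by (simp add: real_sqrt_mult mult_right_mono)
  moreover have "real d = s + t + 2" by (simp add: d_eq)
  moreover have "t + 3 \<le> t * sqrt N"
    using \<open>1 \<le> t\<close> \<open>t + 3 \<le> sqrt N\<close> mult_right_mono[of 1 "real t" "sqrt N"] by simp
  ultimately show "d \<le> 2 * t * sqrt N" using s_le by linarith
qed

lemma one_minus_power_ge_inverse_sqrt:
  fixes x :: real
  assumes "0 \<le> x" "x \<le> 1/2" "1 \<le> n" "6 * x * n \<le> ln n"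
  shows "1 / sqrt n \<le> (1 - x) ^ n"
proof -
  have "- x - 2 * x^2 \<le> ln (1 - x)" using ln_one_minus_pos_lower_bound[OF assms(1,2)] by simp
  moreover have "x^2 \<le> x" using assms(1,2) by (simp add: power2_eq_square mult_left_le)
  ultimately have "- 3 * x \<le> ln (1 - x)" by linarith
  from mult_left_mono[OF this, of "real n"] have "- 3 * x * n \<le> n * ln (1 - x)"
    by (simp add: algebra_simps)
  then have "- (ln n / 2) \<le> n * ln (1 - x)" using assms(4) by linarith
  then have "exp (- (ln n / 2)) \<le> exp (n * ln (1 - x))" by simp
  also have "\<dots> = (1 - x) ^ n" using assms(2) by (simp add: exp_of_nat_mult)
  finally have "exp (- (ln n / 2)) \<le> (1 - x) ^ n" .
  moreover have "sqrt n = exp (ln n / 2)"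
    using assms(3) by (simp add: powr_half_sqrt[symmetric] powr_def)
  then have "exp (- (ln n / 2)) = 1 / sqrt n" by (simp add: exp_minus inverse_eq_divide)
  ultimately show ?thesis by simp
qed

lemma br_cycle_Knn_le:
  fixes k t n N :: nat
  assumes "2 \<le> t" "1 \<le> k" "2 \<le> n"
    and "t + 3 \<le> sqrt N" "32 * k * t \<le> sqrt N" "96 * k * t * n / ln n \<le> sqrt N"
    and "2 * n * sqrt n \<le> N"
  shows "br_cycle_Knn k t n \<le> N"
proof -
  define d where "d = nat \<lceil>sqrt (t * N)\<rceil> + t + 2"
  have d: "t + 1 < d" "t * N < (d - 1 - t) * d" "d \<le> 2 * t * sqrt N"
    using sqrt_degree_threshold[of t N] assms(1,4) unfolding d_def by auto
  have "0 < sqrt N" using assms(4) of_nat_0_le_iff[of t] by linarith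
  then have "0 < real N" by simp
  have "0 < ln n" using assms(3) by simp
  define x where "x = 8 * real (k * d) / N"
  have "8 * real (k * d) \<le> 16 * k * t * sqrt N"
    using mult_left_mono[OF d(3), of "8 * real k"] by (simp add: algebra_simps)
  then have "x \<le> 16 * k * t * sqrt N / (sqrt N * sqrt N)"
    unfolding x_def real_sqrt_mult_self abs_of_nat by (rule divide_right_mono) simp
  also have "\<dots> = 16 * k * t / sqrt N"
    using \<open>0 < sqrt N\<close> by (intro nonzero_mult_divide_mult_cancel_right) simp
  finally have x_le: "x \<le> 16 * k * t / sqrt N" .
  also have "\<dots> \<le> 1 / 2" using assms(5) \<open>0 < sqrt N\<close> by (simp add: pos_divide_le_eq)
  finally have "x \<le> 1 / 2" .
  then have "real (8 * k * d) \<le> N" using \<open>0 < real N\<close> by (simp add: x_def pos_divide_le_eq)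
  then have "8 * k * d \<le> N" by (simp only: of_nat_le_iff)
  have "6 * x * n \<le> 96 * k * t * n / sqrt N"
    using mult_right_mono[OF x_le, of "6 * real n"] by (simp add: algebra_simps)
  also have "\<dots> \<le> ln n"
    using assms(6) \<open>0 < sqrt N\<close> \<open>0 < ln n\<close> by (simp add: pos_divide_le_eq mult.commute)
  finally have "1 / sqrt n \<le> (1 - x) ^ n"
    using \<open>x \<le> 1 / 2\<close> assms(3) by (intro one_minus_power_ge_inverse_sqrt) (simp_all add: x_def)
  then have "2 * n * sqrt n * (1 / sqrt n) \<le> N * (1 - x) ^ n"
    using assms(7) by (intro mult_mono) simp_all
  then have "2 * real n \<le> N * (1 - 8 * real (k * d) / N) ^ n" using assms(3) by (simp add: x_def)
  moreover have "2 * real n * 1 \<le> 2 * real n * sqrt n" using assms(3) by (intro mult_left_mono) simp_all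
  then have "real (2 * n) \<le> N" using assms(7) by simp
  then have "2 * n \<le> N" by (simp only: of_nat_le_iff)
  ultimately have "\<forall>col. (\<forall>i<N. \<forall>j<N. col i j \<in> {1..k + 1}) \<longrightarrow>
      (\<exists>c\<in>{1..k}. has_mono_cycle N col c t) \<or> has_mono_Knn N col (k + 1) n"
    using mono_Knn_if_no_mono_cycle[OF assms(1,2) d(1,2) \<open>8 * k * d \<le> N\<close>] by blast
  then show ?thesis unfolding br_cycle_Knn_def by (rule Least_le)
qed

lemma mult_sqrt_le_square_div_ln:
  fixes \<gamma> :: real and n :: nat
  assumes "2 \<le> \<gamma> ^ 2" "2 \<le> n" "ln n ^ 2 \<le> sqrt n"
  shows "2 * n * sqrt n \<le> (\<gamma> * n / ln n) ^ 2"
proof -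
  have "0 < ln n" using assms(2) by simp
  have "2 * real n * sqrt n * ln n ^ 2 \<le> 2 * real n * sqrt n * sqrt n"
    using assms(3) by (intro mult_left_mono) simp_all
  also have "\<dots> = 2 * real n ^ 2" by (simp add: power2_eq_square)
  also have "\<dots> \<le> \<gamma> ^ 2 * real n ^ 2" using assms(1) by (intro mult_right_mono) simp_all
  also have "\<dots> = (\<gamma> * n / ln n) ^ 2 * ln n ^ 2"
    using \<open>0 < ln n\<close> by (simp add: power_divide power_mult_distrib)
  finally show ?thesis using \<open>0 < ln n\<close> by simp
qed

lemma br_cycle_Knn_le_log_bound:
  fixes k t n :: nat
  assumes "2 \<le> t" "1 \<le> k" "2 \<le> n" "ln n ^ 2 \<le> sqrt n"
  shows "br_cycle_Knn k t n \<le> 2 * (96 * real k * real t) ^ 2 * real n ^ 2 / ln (real n) ^ 2"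
proof -
  define \<gamma> where "\<gamma> = 96 * real k * real t"
  define L where "L = \<gamma> * n / ln n"
  define N where "N = nat \<lceil>L ^ 2\<rceil>"
  have "real t \<le> real k * real t" using assms(2) mult_right_mono[of 1 "real k" "real t"] by simp
  then have \<gamma>: "t + 3 \<le> \<gamma>" "32 * k * t \<le> \<gamma>"
    using assms(1) unfolding \<gamma>_def by (simp_all only: of_nat_mult of_nat_numeral)
  have "0 < ln n" using assms(3) by simp
  have N_eq: "real N = of_int \<lceil>L ^ 2\<rceil>" by (simp add: N_def)
  have N_ge: "L ^ 2 \<le> N" unfolding N_eq by (rule le_of_int_ceiling)
  have N_le: "N \<le> L ^ 2 + 1" unfolding N_eq by (rule of_int_ceiling_le_add_one)
  have "ln n \<le> n" using assms(3) by (intro less_imp_le ln_less_self) simp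
  then have "\<gamma> \<le> L" using \<gamma>(1) \<open>0 < ln n\<close> by (simp add: L_def pos_le_divide_eq mult_left_mono)
  have "L \<le> sqrt N" using N_ge by (rule real_le_rsqrt)
  have "5 \<le> \<gamma>" using \<gamma>(1) assms(1) by simp
  then have "2 \<le> \<gamma> ^ 2" using mult_mono[of 5 \<gamma> 5 \<gamma>] by (simp add: power2_eq_square)
  then have "2 * n * sqrt n \<le> N"
    using mult_sqrt_le_square_div_ln[OF _ assms(3,4)] N_ge by (fastforce simp: L_def)
  then have "br_cycle_Knn k t n \<le> N"
    using assms(1-3) \<gamma> \<open>\<gamma> \<le> L\<close> \<open>L \<le> sqrt N\<close>
    by (intro br_cycle_Knn_le) (simp_all add: L_def \<gamma>_def)
  then have "br_cycle_Knn k t n \<le> L ^ 2 + 1" using N_le by linarith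
  also have "\<dots> \<le> 2 * L ^ 2"
  proof -
    have "1 \<le> L" using \<gamma>(1) \<open>\<gamma> \<le> L\<close> by simp
    then show ?thesis using one_le_power[of L 2] by linarith
  qed
  also have "\<dots> = 2 * \<gamma> ^ 2 * real n ^ 2 / ln (real n) ^ 2"
    by (simp add: L_def power_divide power_mult_distrib)
  finally show ?thesis by (simp only: \<gamma>_def)
qed

theorem theorem2:
  fixes t k :: nat
  assumes "t \<ge> 2" and "k \<ge> 2"
  shows "\<exists>c :: real. c > 0 \<and>
    (\<forall>\<^sub>F n in sequentially. real (br_cycle_Knn k t n) \<le> c * real n ^ 2 / (ln (real n)) ^ 2)"
proof (intro exI conjI)
  show "0 < 2 * (96 * real k * real t) ^ 2" using assms by simp
  have "\<forall>\<^sub>F n in sequentially. ln (real n) ^ 2 \<le> sqrt (real n)" by real_asymp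
  moreover have "\<forall>\<^sub>F n in sequentially. 2 \<le> n" by (rule eventually_ge_at_top)
  ultimately show "\<forall>\<^sub>F n in sequentially.
      real (br_cycle_Knn k t n) \<le> 2 * (96 * real k * real t) ^ 2 * real n ^ 2 / (ln (real n)) ^ 2"
    by eventually_elim (use br_cycle_Knn_le_log_bound assms in auto)
qed

end
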